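(* Let $(\Omega,\mathcal A)$ be a measurable space. Suppose that to each non-empty compact set $L\subset\mathbb C^n$ is assigned a family $A(L)$ of continuous functions on $L$ such that whenever $Q\subset L$ is compact and $f\in A(L)$, then $f|_Q\in A(Q)$. Let $K$ be a uniformly separable random compact set in $\mathbb C^n$. Then $A_{[\Omega]}^{unif}(K)=A_{[\Omega]}(K)$.
   Context: A random compact set is a measurable map $K$ from $\Omega$ to the space of non-empty compact subsets of $\mathbb C^n$ with the Hausdorff distance and its Borel $\sigma$-algebra; it is uniformly separable if there is a countable $E\subset\mathbb C^n$ with $E\cap K(\omega)$ dense in $K(\omega)$ for all $\omega$. Let $\operatorname{Gr}K=\{(\omega,z)\in\Omega\times\mathbb C^n:z\in K(\omega)\}$ and $K^{-1}(z)=\{\omega:z\in K(\omega)\}$ (a measurable set). A generalized random function is $f:\operatorname{Gr}K\to\mathbb C$ such that for each $z$ with $K^{-1}(z)\ne\emptyset$, $f(\cdot,z):K^{-1}(z)\to\mathbb C$ is measurable. A generalized $A(K)$-random function is a generalized random function with $f(\omega,\cdot)\in A(K(\omega))$ for all $\omega$; generalized $C(K)$-random functions are those with $f(\omega,\cdot)$ continuous on $K(\omega)$ for all $\omega$. $A_{[\Omega]}(K)$ is the set of generalized $C(K)$-random functions $f$ for which there is a sequence of generalized $A(K)$-random functions $f_j$ with $f_j(\omega,\cdot)\to f(\omega,\cdot)$ uniformly on $K(\omega)$ for each $\omega$. $A_{[\Omega]}^{unif}(K)$ is the set of generalized $C(K)$-random functions $f$ for which there is a sequence of generalized $A(K)$-random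 functions $f_j$ with $f_j\to f$ uniformly on $\operatorname{Gr}K$. *)

theory Defs
  imports "HOL-Analysis.Analysis" "HOL-Probability.Probability"
begin

type_synonym 'n cvec = "complex ^ 'n"

definition hausdist :: "'a::metric_space set \<Rightarrow> 'a set \<Rightarrow> real" where
  "hausdist S T = max (SUP x\<in>S. infdist x T) (SUP y\<in>T. infdist y S)"

definition ne_compacts :: "'a::metric_space set set" where
  "ne_compacts = {S. compact S \<and> S \<noteq> {}}"

definition hausdorff_open :: "'a::metric_space set set \<Rightarrow> bool" where
  "hausdorff_open U \<longleftrightarrow> U \<subseteq> ne_compacts \<and>
     (\<forall>S\<in>U. \<exists>e>0. \<forall>T\<in>ne_compacts. hausdist S T < e \<longrightarrow> T \<in> U)"

definition hausdorff_borel :: "'a::metric_space set measure" where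
  "hausdorff_borel = sigma ne_compacts (Collect hausdorff_open)"

definition random_compact_set :: "'a measure \<Rightarrow> ('a \<Rightarrow> 'n::finite cvec set) \<Rightarrow> bool" where
  "random_compact_set M K \<longleftrightarrow> K \<in> M \<rightarrow>\<^sub>M hausdorff_borel"

definition uniformly_separable :: "'a measure \<Rightarrow> ('a \<Rightarrow> 'n::finite cvec set) \<Rightarrow> bool" where
  "uniformly_separable M K \<longleftrightarrow>
     (\<exists>E. countable E \<and> (\<forall>\<omega>\<in>space M. K \<omega> \<subseteq> closure (E \<inter> K \<omega>)))"

definition graph_rcs :: "'a measure \<Rightarrow> ('a \<Rightarrow> 'n::finite cvec set) \<Rightarrow> ('a \<times> 'n cvec) set" where
  "graph_rcs M K = Sigma (space M) K"

definition rcs_preimage :: "'a measure \<Rightarrow> ('a \<Rightarrow> 'n::finite cvec set) \<Rightarrow> 'n cvec \<Rightarrow> 'a set" where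
  "rcs_preimage M K z = {\<omega>\<in>space M. z \<in> K \<omega>}"

text \<open>Functions are total; only their values on the graph of K matter.\<close>
definition gen_random_function ::
  "'a measure \<Rightarrow> ('a \<Rightarrow> 'n::finite cvec set) \<Rightarrow> ('a \<Rightarrow> 'n cvec \<Rightarrow> complex) \<Rightarrow> bool" where
  "gen_random_function M K f \<longleftrightarrow>
     (\<forall>z. rcs_preimage M K z \<noteq> {} \<longrightarrow>
        (\<lambda>\<omega>. f \<omega> z) \<in> borel_measurable (restrict_space M (rcs_preimage M K z)))"

definition in_fam :: "('n cvec set \<Rightarrow> ('n cvec \<Rightarrow> complex) set) \<Rightarrow> 'n cvec set \<Rightarrow> ('n cvec \<Rightarrow> complex) \<Rightarrow> bool" where
  "in_fam A L g \<longleftrightarrow> (\<exists>h\<in>A L. \<forall>x\<in>L. g x = h x)"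

definition gen_A_random_function ::
  "('n cvec set \<Rightarrow> ('n cvec \<Rightarrow> complex) set) \<Rightarrow> 'a measure \<Rightarrow> ('a \<Rightarrow> 'n::finite cvec set)
     \<Rightarrow> ('a \<Rightarrow> 'n cvec \<Rightarrow> complex) \<Rightarrow> bool" where
  "gen_A_random_function A M K f \<longleftrightarrow>
     gen_random_function M K f \<and> (\<forall>\<omega>\<in>space M. in_fam A (K \<omega>) (f \<omega>))"

definition gen_C_random_function ::
  "'a measure \<Rightarrow> ('a \<Rightarrow> 'n::finite cvec set) \<Rightarrow> ('a \<Rightarrow> 'n cvec \<Rightarrow> complex) \<Rightarrow> bool" where
  "gen_C_random_function M K f \<longleftrightarrow>
     gen_random_function M K f \<and> (\<forall>\<omega>\<in>space M. continuous_on (K \<omega>) (f \<omega>))"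

definition A_Omega ::
  "('n cvec set \<Rightarrow> ('n cvec \<Rightarrow> complex) set) \<Rightarrow> 'a measure \<Rightarrow> ('a \<Rightarrow> 'n::finite cvec set)
     \<Rightarrow> ('a \<Rightarrow> 'n cvec \<Rightarrow> complex) \<Rightarrow> bool" where
  "A_Omega A M K f \<longleftrightarrow> gen_C_random_function M K f \<and>
     (\<exists>fs::nat \<Rightarrow> 'a \<Rightarrow> 'n cvec \<Rightarrow> complex. (\<forall>j. gen_A_random_function A M K (fs j)) \<and>
        (\<forall>\<omega>\<in>space M. uniform_limit (K \<omega>) (\<lambda>j. fs j \<omega>) (f \<omega>) sequentially))"

definition A_Omega_unif ::
  "('n cvec set \<Rightarrow> ('n cvec \<Rightarrow> complex) set) \<Rightarrow> 'a measure \<Rightarrow> ('a \<Rightarrow> 'n::finite cvec set)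
     \<Rightarrow> ('a \<Rightarrow> 'n cvec \<Rightarrow> complex) \<Rightarrow> bool" where
  "A_Omega_unif A M K f \<longleftrightarrow> gen_C_random_function M K f \<and>
     (\<exists>fs::nat \<Rightarrow> 'a \<Rightarrow> 'n cvec \<Rightarrow> complex. (\<forall>j. gen_A_random_function A M K (fs j)) \<and>
        uniform_limit (graph_rcs M K) (\<lambda>j (\<omega>, z). fs j \<omega> z) (\<lambda>(\<omega>, z). f \<omega> z) sequentially)"

end

theory Submission
  imports Defs
begin

text \<open>
  Given a tolerance c > 0, choose for each \<omega> the least index j for which the approximant
  f_j(\<omega>, -) is c-close to f(\<omega>, -) on the countable dense set E \<inter> K(\<omega>). By
  continuity it is then c-close on all of K(\<omega>); and since E is countable and each set
  {\<omega>. e \<in> K(\<omega>)} is measurable, this index depends measurably on \<omega>, so that the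
  selected approximants again form a generalized A(K)-random function. Only continuity of the
  members of A(L) enters.
\<close>

lemma random_compact_set_ne_compacts:
  assumes "random_compact_set M K" "\<omega> \<in> space M"
  shows "K \<omega> \<in> ne_compacts"
proof -
  have "K \<omega> \<in> space hausdorff_borel"
    using assms by (auto simp: random_compact_set_def intro: measurable_space)
  then show ?thesis by (simp add: hausdorff_borel_def space_measure_of_conv)
qed

lemma hausdorff_open_avoiding:
  fixes z :: "'a::metric_space"
  shows "hausdorff_open {S\<in>ne_compacts. z \<notin> S}"
  unfolding hausdorff_open_def
proof (intro conjI ballI)
  fix S assume "S \<in> {S\<in>ne_compacts. z \<notin> S}"
  then have S: "compact S" "S \<noteq> {}" "z \<notin> S" by (auto simp: ne_compacts_def)
  have pos: "infdist z S > 0"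
    using S in_closed_iff_infdist_zero[of S z] compact_imp_closed infdist_nonneg[of z S] by force
  show "\<exists>e>0. \<forall>T\<in>ne_compacts. hausdist S T < e \<longrightarrow> T \<in> {S \<in> ne_compacts. z \<notin> S}"
  proof (intro exI[of _ "infdist z S"] conjI pos ballI impI)
    fix T assume T: "T \<in> ne_compacts" and close: "hausdist S T < infdist z S"
    have "bdd_above ((\<lambda>y. infdist y S) ` T)"
      using T by (intro bounded_imp_bdd_above compact_imp_bounded compact_continuous_image
          continuous_on_infdist continuous_on_id) (simp add: ne_compacts_def)
    then have "infdist z S \<le> (SUP y\<in>T. infdist y S)" if "z \<in> T"
      using that by (rule cSUP_upper2) simp
    then have "z \<in> T \<Longrightarrow> infdist z S \<le> hausdist S T"
      unfolding hausdist_def by linarith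
    then show "T \<in> {S \<in> ne_compacts. z \<notin> S}" using T close by auto
  qed
qed auto

lemma rcs_preimage_sets:
  assumes "random_compact_set M K"
  shows "rcs_preimage M K z \<in> sets M"
proof -
  let ?U = "{S\<in>ne_compacts. z \<notin> S}"
  have "Collect hausdorff_open \<subseteq> Pow ne_compacts" by (auto simp: hausdorff_open_def)
  then have "?U \<in> sets hausdorff_borel"
    unfolding hausdorff_borel_def using hausdorff_open_avoiding[of z]
    by (auto simp: sets_measure_of intro: sigma_sets.Basic)
  then have "K -` ?U \<inter> space M \<in> sets M"
    using assms unfolding random_compact_set_def by (rule measurable_sets[rotated])
  moreover have "rcs_preimage M K z = space M - (K -` ?U \<inter> space M)"
    using random_compact_set_ne_compacts[OF assms] by (auto simp: rcs_preimage_def)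
  ultimately show ?thesis by auto
qed

lemma pred_Ball_countable:
  assumes "countable E" "\<And>e. e \<in> E \<Longrightarrow> Measurable.pred M (P e)"
  shows "Measurable.pred M (\<lambda>x. \<forall>e\<in>E. P e x)"
proof (cases "E = {}")
  case False
  have "(\<lambda>x. \<forall>e\<in>E. P e x) = (\<lambda>x. \<forall>i. P (from_nat_into E i) x)"
    using range_from_nat_into[OF False assms(1)] by (metis rangeE rangeI)
  then show ?thesis using assms(2) from_nat_into[OF False] by simp
qed simp

lemma gen_random_function_diff:
  assumes "gen_random_function M K u" "gen_random_function M K v"
  shows "gen_random_function M K (\<lambda>\<omega> z. u \<omega> z - v \<omega> z)"
  using assms unfolding gen_random_function_def
  by (intro allI impI borel_measurable_diff) simp_all

lemma pred_mem_imp_norm_le: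
  assumes "random_compact_set M K" "gen_random_function M K h"
  shows "Measurable.pred M (\<lambda>\<omega>. z \<in> K \<omega> \<longrightarrow> norm (h \<omega> z) \<le> c)"
proof (cases "rcs_preimage M K z = {}")
  case True
  then have "{\<omega>\<in>space M. z \<in> K \<omega> \<longrightarrow> norm (h \<omega> z) \<le> c} = space M"
    by (auto simp: rcs_preimage_def)
  then show ?thesis by (simp add: pred_def)
next
  case False
  let ?R = "rcs_preimage M K z"
  have "(\<lambda>\<omega>. h \<omega> z) \<in> borel_measurable (restrict_space M ?R)"
    using assms(2) False by (simp add: gen_random_function_def)
  then have "Measurable.pred (restrict_space M ?R) (\<lambda>\<omega>. \<not> norm (h \<omega> z) \<le> c)"
    by measurable
  then have "Measurable.pred M (\<lambda>\<omega>. \<omega> \<in> ?R \<and> \<not> norm (h \<omega> z) \<le> c)"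
    using rcs_preimage_sets[OF assms(1)] by (simp add: pred_restrict_space)
  then have "Measurable.pred M (\<lambda>\<omega>. \<not> (\<omega> \<in> ?R \<and> \<not> norm (h \<omega> z) \<le> c))"
    by measurable
  moreover have "{\<omega>\<in>space M. \<not> (\<omega> \<in> ?R \<and> \<not> norm (h \<omega> z) \<le> c)}
      = {\<omega>\<in>space M. z \<in> K \<omega> \<longrightarrow> norm (h \<omega> z) \<le> c}"
    by (auto simp: rcs_preimage_def)
  ultimately show ?thesis by (simp add: pred_def)
qed

lemma gen_random_function_select:
  fixes J :: "'a \<Rightarrow> 'i::countable"
  assumes "\<And>j. gen_random_function M K (fs j)" "J \<in> M \<rightarrow>\<^sub>M count_space UNIV"
  shows "gen_random_function M K (\<lambda>\<omega>. fs (J \<omega>) \<omega>)"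
  unfolding gen_random_function_def
proof (intro allI impI)
  fix z assume "rcs_preimage M K z \<noteq> {}"
  then have "(\<lambda>\<omega>. fs j \<omega> z) \<in> borel_measurable (restrict_space M (rcs_preimage M K z))" for j
    using assms(1) by (simp add: gen_random_function_def)
  moreover have "J \<in> restrict_space M (rcs_preimage M K z) \<rightarrow>\<^sub>M count_space UNIV"
    using assms(2) by (rule measurable_restrict_space1)
  ultimately show "(\<lambda>\<omega>. fs (J \<omega>) \<omega> z) \<in> borel_measurable (restrict_space M (rcs_preimage M K z))"
    by (rule measurable_compose_countable') simp_all
qed

lemma measurable_index_uniform_approx:
  assumes K_rcs: "random_compact_set M K" and K_sep: "uniformly_separable M K"
    and fs: "\<And>j. gen_random_function M K (fs j)"
    and fs_cont: "\<And>j \<omega>. \<omega> \<in> space M \<Longrightarrow> continuous_on (K \<omega>) (fs j \<omega>)"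
    and f: "gen_C_random_function M K f"
    and lim: "\<And>\<omega>. \<omega> \<in> space M \<Longrightarrow> uniform_limit (K \<omega>) (\<lambda>j. fs j \<omega>) (f \<omega>) sequentially"
    and "c > 0"
  shows "\<exists>J :: 'a \<Rightarrow> nat. J \<in> M \<rightarrow>\<^sub>M count_space UNIV \<and>
    (\<forall>\<omega>\<in>space M. \<forall>z\<in>K \<omega>. norm (fs (J \<omega>) \<omega> z - f \<omega> z) \<le> c)"
proof -
  obtain E where E: "countable E" and dense: "\<And>\<omega>. \<omega> \<in> space M \<Longrightarrow> K \<omega> \<subseteq> closure (E \<inter> K \<omega>)"
    using K_sep unfolding uniformly_separable_def by blast
  define good where "good j \<omega> \<longleftrightarrow> (\<forall>e\<in>E. e \<in> K \<omega> \<longrightarrow> norm (fs j \<omega> e - f \<omega> e) \<le> c)" for j \<omega>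
  define J where "J \<omega> = (LEAST j. good j \<omega>)" for \<omega>
  have "Measurable.pred M (good j)" for j
    unfolding good_def using fs f E
    by (intro pred_Ball_countable pred_mem_imp_norm_le K_rcs gen_random_function_diff)
      (auto simp: gen_C_random_function_def)
  then have "J \<in> M \<rightarrow>\<^sub>M count_space UNIV"
    unfolding J_def by measurable
  moreover have "norm (fs (J \<omega>) \<omega> z - f \<omega> z) \<le> c" if \<omega>: "\<omega> \<in> space M" and z: "z \<in> K \<omega>" for \<omega> z
  proof -
    have "\<forall>\<^sub>F j in sequentially. \<forall>x\<in>K \<omega>. dist (fs j \<omega> x) (f \<omega> x) < c"
      using lim[OF \<omega>] \<open>c > 0\<close> unfolding uniform_limit_iff by blast
    then obtain j where "\<forall>x\<in>K \<omega>. dist (fs j \<omega> x) (f \<omega> x) < c"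
      unfolding eventually_sequentially by blast
    then have "good j \<omega>"
      by (auto simp: good_def dist_norm less_imp_le)
    then have good_J: "good (J \<omega>) \<omega>"
      unfolding J_def by (rule LeastI)
    have closure_eq: "closure (E \<inter> K \<omega>) = K \<omega>"
      using dense[OF \<omega>] random_compact_set_ne_compacts[OF K_rcs \<omega>]
      by (intro antisym closure_minimal) (auto simp: ne_compacts_def compact_imp_closed)
    have "continuous_on (closure (E \<inter> K \<omega>)) (\<lambda>x. fs (J \<omega>) \<omega> x - f \<omega> x)"
      unfolding closure_eq using fs_cont[OF \<omega>] f \<omega>
      by (intro continuous_intros) (auto simp: gen_C_random_function_def)
    then show ?thesis
      by (rule continuous_on_closure_norm_le) (use good_J z closure_eq in \<open>auto simp: good_def\<close>)
  qed
  ultimately show ?thesis by blast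
qed

lemma uniform_limit_Sigma_imp_fibre:
  assumes "uniform_limit (Sigma I S) (\<lambda>j (x, y). f j x y) (\<lambda>(x, y). g x y) F" "x \<in> I"
  shows "uniform_limit (S x) (\<lambda>j. f j x) (g x) F"
  unfolding uniform_limit_iff
proof (intro allI impI)
  fix e :: real assume "e > 0"
  with assms(1) have "\<forall>\<^sub>F j in F. \<forall>p\<in>Sigma I S. dist ((\<lambda>(x, y). f j x y) p) ((\<lambda>(x, y). g x y) p) < e"
    unfolding uniform_limit_iff by blast
  then show "\<forall>\<^sub>F j in F. \<forall>y\<in>S x. dist (f j x y) (g x y) < e"
    by eventually_elim (use assms(2) in auto)
qed

lemma uniform_limit_sequentially_dist_le:
  assumes "\<And>k x. x \<in> S \<Longrightarrow> dist (f k x) (g x) \<le> e k" "e \<longlonglongrightarrow> 0"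
  shows "uniform_limit S f g sequentially"
  unfolding uniform_limit_iff
proof (intro allI impI)
  fix \<epsilon> :: real assume "\<epsilon> > 0"
  with assms(2) have "\<forall>\<^sub>F k in sequentially. e k < \<epsilon>"
    by (auto dest: order_tendstoD)
  then show "\<forall>\<^sub>F k in sequentially. \<forall>x\<in>S. dist (f k x) (g x) < \<epsilon>"
    by eventually_elim (use assms(1) in \<open>fastforce intro: le_less_trans\<close>)
qed

lemma gen_A_random_function_continuous_on:
  assumes "gen_A_random_function A M K f" "random_compact_set M K" "\<omega> \<in> space M"
    and A_cont: "\<And>L g. compact L \<Longrightarrow> L \<noteq> {} \<Longrightarrow> g \<in> A L \<Longrightarrow> continuous_on L g"
  shows "continuous_on (K \<omega>) (f \<omega>)"
proof -
  obtain h where "h \<in> A (K \<omega>)" "\<forall>x\<in>K \<omega>. f \<omega> x = h x"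
    using assms(1,3) unfolding gen_A_random_function_def in_fam_def by blast
  moreover have "compact (K \<omega>)" "K \<omega> \<noteq> {}"
    using random_compact_set_ne_compacts[OF assms(2,3)] by (simp_all add: ne_compacts_def)
  ultimately show ?thesis
    using A_cont continuous_on_eq by metis
qed

theorem theorem7p4:
  fixes M :: "'a measure"
    and A :: "(complex ^ 'n::finite) set \<Rightarrow> ((complex ^ 'n) \<Rightarrow> complex) set"
    and K :: "'a \<Rightarrow> (complex ^ 'n) set"
  assumes A_cont: "\<And>L g. compact L \<Longrightarrow> L \<noteq> {} \<Longrightarrow> g \<in> A L \<Longrightarrow> continuous_on L g"
    and A_restr: "\<And>L Q g. compact L \<Longrightarrow> L \<noteq> {} \<Longrightarrow> compact Q \<Longrightarrow> Q \<noteq> {} \<Longrightarrow> Q \<subseteq> L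
                    \<Longrightarrow> g \<in> A L \<Longrightarrow> in_fam A Q g"
    and K_rcs: "random_compact_set M K"
    and K_sep: "uniformly_separable M K"
  shows "A_Omega_unif A M K f \<longleftrightarrow> A_Omega A M K f"
proof
  assume "A_Omega_unif A M K f"
  then obtain fs where "gen_C_random_function M K f" "\<And>j. gen_A_random_function A M K (fs j)"
    and "uniform_limit (Sigma (space M) K) (\<lambda>j (\<omega>, z). fs j \<omega> z) (\<lambda>(\<omega>, z). f \<omega> z) sequentially"
    unfolding A_Omega_unif_def graph_rcs_def by blast
  then show "A_Omega A M K f"
    unfolding A_Omega_def by (blast intro: uniform_limit_Sigma_imp_fibre)
next
  assume "A_Omega A M K f"
  then obtain fs where fs: "\<And>j. gen_A_random_function A M K (fs j)"
    and lim: "\<And>\<omega>. \<omega> \<in> space M \<Longrightarrow> uniform_limit (K \<omega>) (\<lambda>j. fs j \<omega>) (f \<omega>) sequentially"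
    and f: "gen_C_random_function M K f"
    unfolding A_Omega_def by blast
  have fs_random: "gen_random_function M K (fs j)" for j
    using fs by (simp add: gen_A_random_function_def)
  have fs_cont: "continuous_on (K \<omega>) (fs j \<omega>)" if "\<omega> \<in> space M" for j \<omega>
    using gen_A_random_function_continuous_on[OF fs K_rcs that A_cont] .
  have "\<forall>k. \<exists>J :: 'a \<Rightarrow> nat. J \<in> M \<rightarrow>\<^sub>M count_space UNIV \<and>
      (\<forall>\<omega>\<in>space M. \<forall>z\<in>K \<omega>. norm (fs (J \<omega>) \<omega> z - f \<omega> z) \<le> inverse (real (Suc k)))"
    using measurable_index_uniform_approx[OF K_rcs K_sep fs_random fs_cont f lim] by simp
  then obtain J :: "nat \<Rightarrow> 'a \<Rightarrow> nat" where J: "\<And>k. J k \<in> M \<rightarrow>\<^sub>M count_space UNIV"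
    and close: "\<And>k \<omega> z. \<omega> \<in> space M \<Longrightarrow> z \<in> K \<omega> \<Longrightarrow> norm (fs (J k \<omega>) \<omega> z - f \<omega> z) \<le> inverse (real (Suc k))"
    by (rule exE[OF choice]) blast
  have selected: "gen_A_random_function A M K (\<lambda>\<omega>. fs (J k \<omega>) \<omega>)" for k
    using fs gen_random_function_select[where fs=fs, OF fs_random J] unfolding gen_A_random_function_def by blast
  have uniform: "uniform_limit (graph_rcs M K) (\<lambda>k (\<omega>, z). fs (J k \<omega>) \<omega> z) (\<lambda>(\<omega>, z). f \<omega> z) sequentially"
    using close LIMSEQ_inverse_real_of_nat
    by (intro uniform_limit_sequentially_dist_le) (auto simp: graph_rcs_def dist_norm)
  show "A_Omega_unif A M K f"
    unfolding A_Omega_unif_def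
    using f selected uniform by (intro conjI exI[of _ "\<lambda>k \<omega>. fs (J k \<omega>) \<omega>"]) simp_all
qed

end
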